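(* Let $\hat A=\sum_{i=1}^p b_i\prod_{j=1}^{l_i}(\hat a^\dagger)^{n_{i,j}}(\hat a)^{m_{i,j}}$ be a single-mode operator, with $b_i\in\mathbb C$ and nonnegative integers $n_{i,j},m_{i,j}$, such that every term contains at most $n$ creation operators in total, i.e. $\sum_{j=1}^{l_i}n_{i,j}\le n$ for all $i$. Then $\hat A$ has approximate operator coherent rank at most $n+1$.
   Context: Single mode with Fock basis $\{|n\rangle\}$, annihilation operator $\hat a=\sum_{n\ge1}\sqrt n|n-1\rangle\langle n|$, creation operator $\hat a^\dagger$. Coherent state $|\alpha\rangle=e^{-|\alpha|^2/2}\sum_n\frac{\alpha^n}{\sqrt{n!}}|n\rangle$. A (possibly unnormalized) state has coherent rank $k$ if it is a superposition of $k$ coherent states; its approximate coherent rank is the smallest $k$ such that for every $\delta>0$ there is a coherent rank $k$ state with fidelity (after normalization) greater than $1-\delta$ to it. An operator $\hat A$ has approximate operator coherent rank $\ell$ iff $\hat A|\alpha\rangle$ has approximate coherent rank at most $\ell$ for every coherent state $|\alpha\rangle$. *)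

theory Defs
  imports "HOL-Analysis.Analysis"
begin

text \<open>Single-mode states are represented by their Fock-basis coefficient
  sequences (coefficient of the number state n).\<close>

type_synonym state = "nat \<Rightarrow> complex"

definition ann :: "state \<Rightarrow> state" where
  "ann \<psi> = (\<lambda>k. complex_of_real (sqrt (real (Suc k))) * \<psi> (Suc k))"

definition adag :: "state \<Rightarrow> state" where
  "adag \<psi> = (\<lambda>k. if k = 0 then 0 else complex_of_real (sqrt (real k)) * \<psi> (k - 1))"

definition coh :: "complex \<Rightarrow> state" where
  "coh \<alpha> = (\<lambda>k. complex_of_real (exp (- ((cmod \<alpha>) ^ 2) / 2)) * \<alpha> ^ k
                   / complex_of_real (sqrt (fact k)))"

text \<open>Normally-ordered monomial product: the list [(n1,m1),...,(nl,ml)] denotes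
  (a^dag)^n1 a^m1 (a^dag)^n2 a^m2 ... (a^dag)^nl a^ml.\<close>
definition word_op :: "(nat \<times> nat) list \<Rightarrow> state \<Rightarrow> state" where
  "word_op ws = foldr (\<lambda>(n, m) F. (adag ^^ n) \<circ> (ann ^^ m) \<circ> F) ws id"

definition inner_st :: "state \<Rightarrow> state \<Rightarrow> complex" where
  "inner_st \<phi> \<psi> = infsum (\<lambda>k. cnj (\<phi> k) * \<psi> k) UNIV"

definition fidelity :: "state \<Rightarrow> state \<Rightarrow> real" where
  "fidelity \<phi> \<psi> = (cmod (inner_st \<phi> \<psi>))^2 / (Re (inner_st \<phi> \<phi>) * Re (inner_st \<psi> \<psi>))"

text \<open>Coherent rank at most k: a superposition of k coherent states
  (coefficients may vanish / points may repeat, so this means rank \<le> k).\<close>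
definition coherent_rank_le :: "state \<Rightarrow> nat \<Rightarrow> bool" where
  "coherent_rank_le \<phi> k \<longleftrightarrow>
     (\<exists>c \<alpha> :: nat \<Rightarrow> complex. \<phi> = (\<lambda>j. \<Sum>i<k. c i * coh (\<alpha> i) j))"

text \<open>Approximate coherent rank at most l. The zero vector (empty superposition,
  coherent rank 0) is included explicitly, since fidelity to it is undefined.\<close>
definition approx_coherent_rank_le :: "state \<Rightarrow> nat \<Rightarrow> bool" where
  "approx_coherent_rank_le \<psi> l \<longleftrightarrow>
     \<psi> = (\<lambda>_. 0) \<or>
     (\<forall>\<delta>>0. \<exists>\<phi>. coherent_rank_le \<phi> l \<and> fidelity \<phi> \<psi> > 1 - \<delta>)"

definition approx_op_coherent_rank_le :: "(state \<Rightarrow> state) \<Rightarrow> nat \<Rightarrow> bool" where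
  "approx_op_coherent_rank_le A l \<longleftrightarrow> (\<forall>\<alpha>. approx_coherent_rank_le (A (coh \<alpha>)) l)"

end

(*
  Write a state through its Bargmann coefficients p n = sqrt(n!) * psi n.  Up to normalisation the
  coherent state |alpha> is p n = alpha^n, and in these coordinates a acts as the shift
  p n |-> p (n + 1) and a^dagger as p n |-> n * p (n - 1).  Hence a normally ordered word with at
  most N creation operators maps |alpha> into the span of the derivatives (d/dz)^k z^n at z = alpha,
  k <= N.  Such a combination is the limit, as h -> 0, of finite differences
  sum_{j<=N} c_j(h) (alpha + j h)^n, i.e. of superpositions of the N + 1 coherent states
  |alpha + j h>; the weights c_j(h) invert the Vandermonde system on the nodes 0..N and the
  coefficientwise error is O(h) (|alpha| + N)^n.  As (|alpha| + N + 1)^n / sqrt(n!) is square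
  summable, the fidelity tends to 1.
*)
theory Submission
  imports Defs "HOL-Computational_Algebra.Polynomial"
begin

section \<open>Lagrange interpolation on the nodes 0, ..., N\<close>

definition lagrange_basis :: "nat \<Rightarrow> nat \<Rightarrow> 'a::field_char_0 poly" where
  "lagrange_basis N j = (\<Prod>i\<in>{..N}-{j}. smult (inverse (of_nat j - of_nat i)) [:- of_nat i, 1:])"

lemma degree_lagrange_basis:
  assumes "j \<le> N" shows "degree (lagrange_basis N j) \<le> N"
proof -
  have "degree (lagrange_basis N j :: 'a poly) \<le> (\<Sum>i\<in>{..N}-{j}. 1)"
    unfolding lagrange_basis_def
    by (rule order.trans[OF degree_prod_sum_le]) (auto intro!: sum_mono order.trans[OF degree_smult_le])
  also have "\<dots> = N" using assms by simp
  finally show ?thesis .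
qed

lemma poly_lagrange_basis:
  assumes "i \<le> N"
  shows "poly (lagrange_basis N j) (of_nat i :: 'a::field_char_0) = (if i = j then 1 else 0)"
proof (cases "i = j")
  case True
  have "(of_nat i - of_nat i') * inverse (of_nat i - of_nat i') = (1::'a)" if "i' \<noteq> i" for i'
    using that by (intro right_inverse) simp
  with True show ?thesis
    by (auto simp: lagrange_basis_def poly_prod algebra_simps intro!: prod.neutral)
next
  case False
  then show ?thesis
    using assms by (auto simp: lagrange_basis_def poly_prod intro!: prod_zero bexI[of _ i])
qed

lemma sum_power_smult_lagrange_basis:
  assumes "m \<le> N"
  shows "(\<Sum>j\<le>N. smult (of_nat j ^ m) (lagrange_basis N j)) = (monom 1 m :: 'a::field_char_0 poly)"
proof (rule poly_eqI_degree[of "of_nat ` {..N}"])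
  fix x :: 'a assume "x \<in> of_nat ` {..N}"
  then obtain i where "i \<le> N" "x = of_nat i" by auto
  then show "poly (\<Sum>j\<le>N. smult (of_nat j ^ m) (lagrange_basis N j)) x = poly (monom 1 m) x"
    by (simp add: poly_sum poly_lagrange_basis poly_monom if_distrib sum.delta cong: if_cong)
next
  have card: "card (of_nat ` {..N} :: 'a set) = Suc N"
    by (subst card_image) (auto simp: inj_on_def)
  have "degree (\<Sum>j\<le>N. smult (of_nat j ^ m) (lagrange_basis N j) :: 'a poly) \<le> N"
    by (intro degree_sum_le) (auto intro!: order.trans[OF degree_smult_le] degree_lagrange_basis)
  then show "degree (\<Sum>j\<le>N. smult (of_nat j ^ m) (lagrange_basis N j) :: 'a poly)
      < card (of_nat ` {..N} :: 'a set)"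
    using card by simp
  show "degree (monom (1::'a) m) < card (of_nat ` {..N} :: 'a set)"
    using card assms by (simp add: degree_monom_eq)
qed

lemma sum_power_mult_coeff_lagrange_basis:
  assumes "m \<le> N"
  shows "(\<Sum>j\<le>N. of_nat j ^ m * coeff (lagrange_basis N j) k) = (if m = k then 1 else (0::'a::field_char_0))"
  using arg_cong[OF sum_power_smult_lagrange_basis[OF assms], of "\<lambda>p. coeff p k"]
  by (simp add: coeff_sum coeff_monom)

section \<open>Derivatives of powers\<close>

(* pow_deriv alpha k n is the k-th derivative of z^n at z = alpha. *)
definition pow_deriv :: "'a::{comm_semiring_1, semiring_char_0} \<Rightarrow> nat \<Rightarrow> nat \<Rightarrow> 'a" where
  "pow_deriv \<alpha> k n = of_nat (n choose k) * fact k * \<alpha> ^ (n - k)"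

lemma pow_deriv_Suc:
  "pow_deriv \<alpha> k (Suc n) = \<alpha> * pow_deriv \<alpha> k n + of_nat k * pow_deriv \<alpha> (k - 1) n"
proof (cases k)
  case 0
  then show ?thesis by (simp add: pow_deriv_def)
next
  case (Suc k')
  have fact: "of_nat (Suc k') * fact k' = fact (Suc k')" by simp
  show ?thesis
  proof (cases "k' < n")
    case True
    then have "\<alpha> ^ (n - k') = \<alpha> * \<alpha> ^ (n - Suc k')"
      by (metis Suc_diff_Suc power_Suc)
    with Suc True show ?thesis
      by (simp add: pow_deriv_def algebra_simps flip: fact)
  next
    case False
    with Suc show ?thesis
      by (simp add: pow_deriv_def binomial_eq_0 algebra_simps flip: fact)
  qed
qed

lemma pow_deriv_Suc_Suc: "pow_deriv \<alpha> (Suc k) (Suc n) = of_nat (Suc n) * pow_deriv \<alpha> k n"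
proof -
  have "of_nat (Suc n choose Suc k) * fact (Suc k) = of_nat (Suc n) * (of_nat (n choose k) * (fact k :: 'a))"
    using arg_cong[OF Suc_times_binomial_eq[of n k], of "of_nat :: nat \<Rightarrow> 'a"]
    by (simp add: algebra_simps)
  then show ?thesis by (simp add: pow_deriv_def algebra_simps)
qed

lemma norm_pow_deriv_le:
  fixes \<alpha> :: "'a::{real_normed_field}"
  shows "norm (pow_deriv \<alpha> k n) \<le> fact k * (norm \<alpha> + 1) ^ n"
proof -
  have "real (n choose k) * norm \<alpha> ^ (n - k) \<le> (norm \<alpha> + 1) ^ n"
  proof (cases "k \<le> n")
    case True
    have "real (n choose k) * norm \<alpha> ^ (n - k) \<le> (\<Sum>m\<le>n. real (n choose m) * norm \<alpha> ^ (n - m))"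
      using True by (intro member_le_sum) auto
    also have "\<dots> = (norm \<alpha> + 1) ^ n"
      using binomial_ring[of 1 "norm \<alpha>" n] by (simp add: add.commute)
    finally show ?thesis .
  qed (simp add: binomial_eq_0)
  then have "fact k * (real (n choose k) * norm \<alpha> ^ (n - k)) \<le> fact k * (norm \<alpha> + 1) ^ n"
    by (intro mult_left_mono) auto
  then show ?thesis by (simp add: pow_deriv_def norm_mult norm_power algebra_simps)
qed

lemma sum_pow_deriv_binomial:
  "(\<Sum>k\<le>N. q k * pow_deriv \<alpha> k n) =
   (\<Sum>m\<le>n. of_nat (n choose m) * \<alpha> ^ (n - m) * (if m \<le> N then q m * fact m else 0))"
proof -
  have "(\<Sum>k\<le>N. q k * pow_deriv \<alpha> k n) =
      (\<Sum>m\<le>N + n. of_nat (n choose m) * \<alpha> ^ (n - m) * (if m \<le> N then q m * fact m else 0))"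
    by (rule sum.mono_neutral_cong_left) (auto simp: pow_deriv_def binomial_eq_0 mult_ac)
  also have "\<dots> = (\<Sum>m\<le>n. of_nat (n choose m) * \<alpha> ^ (n - m) * (if m \<le> N then q m * fact m else 0))"
    by (rule sum.mono_neutral_cong_right) (auto simp: binomial_eq_0)
  finally show ?thesis .
qed

definition deriv_span :: "'a::{comm_semiring_1, semiring_char_0} \<Rightarrow> nat \<Rightarrow> (nat \<Rightarrow> 'a) set" where
  "deriv_span \<alpha> d = {p. \<exists>q. p = (\<lambda>n. \<Sum>k\<le>d. q k * pow_deriv \<alpha> k n)}"

lemma deriv_spanE:
  assumes "p \<in> deriv_span \<alpha> d"
  obtains q where "p = (\<lambda>n. \<Sum>k\<le>d. q k * pow_deriv \<alpha> k n)"
  using assms unfolding deriv_span_def by blast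

lemma pow_deriv_in_deriv_span:
  assumes "k \<le> d" shows "pow_deriv \<alpha> k \<in> deriv_span \<alpha> d"
  unfolding deriv_span_def
proof (intro CollectI exI ext)
  fix n
  show "pow_deriv \<alpha> k n = (\<Sum>i\<le>d. (if i = k then 1 else 0) * pow_deriv \<alpha> i n)"
    using assms by (simp add: if_distrib[of "\<lambda>c. c * _"] sum.delta' cong: if_cong)
qed

lemma deriv_span_add:
  assumes "p \<in> deriv_span \<alpha> d" "p' \<in> deriv_span \<alpha> d"
  shows "(\<lambda>n. p n + p' n) \<in> deriv_span \<alpha> d"
proof -
  obtain q q' where "p = (\<lambda>n. \<Sum>k\<le>d. q k * pow_deriv \<alpha> k n)" "p' = (\<lambda>n. \<Sum>k\<le>d. q' k * pow_deriv \<alpha> k n)"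
    using assms by (metis deriv_spanE)
  then show ?thesis
    unfolding deriv_span_def by (auto intro!: exI[of _ "\<lambda>k. q k + q' k"] simp: distrib_right sum.distrib)
qed

lemma deriv_span_scale:
  assumes "p \<in> deriv_span \<alpha> d" shows "(\<lambda>n. c * p n) \<in> deriv_span \<alpha> d"
proof -
  obtain q where "p = (\<lambda>n. \<Sum>k\<le>d. q k * pow_deriv \<alpha> k n)"
    using assms by (rule deriv_spanE)
  then show ?thesis
    unfolding deriv_span_def by (auto intro!: exI[of _ "\<lambda>k. c * q k"] simp: sum_distrib_left mult.assoc)
qed

lemma deriv_span_sum:
  "finite A \<Longrightarrow> (\<And>i. i \<in> A \<Longrightarrow> f i \<in> deriv_span \<alpha> d) \<Longrightarrow> (\<lambda>n. \<Sum>i\<in>A. f i n) \<in> deriv_span \<alpha> d"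
proof (induction A rule: finite_induct)
  case empty
  show ?case unfolding deriv_span_def by (auto intro!: exI[of _ "\<lambda>_. 0"])
next
  case (insert x F)
  then show ?case by (simp add: deriv_span_add)
qed

lemma deriv_span_mono:
  assumes "p \<in> deriv_span \<alpha> d" "d \<le> d'" shows "p \<in> deriv_span \<alpha> d'"
proof -
  obtain q where "p = (\<lambda>n. \<Sum>k\<le>d. q k * pow_deriv \<alpha> k n)"
    using assms(1) by (rule deriv_spanE)
  with assms(2) show ?thesis
    by (auto intro!: deriv_span_sum deriv_span_scale pow_deriv_in_deriv_span)
qed

lemma deriv_span_shift:
  assumes "p \<in> deriv_span \<alpha> d" shows "(\<lambda>n. p (Suc n)) \<in> deriv_span \<alpha> d"
proof -
  obtain q where "p = (\<lambda>n. \<Sum>k\<le>d. q k * pow_deriv \<alpha> k n)"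
    using assms by (rule deriv_spanE)
  then show ?thesis
    by (auto simp: pow_deriv_Suc
        intro!: deriv_span_sum deriv_span_scale deriv_span_add pow_deriv_in_deriv_span)
qed

lemma deriv_span_raise:
  assumes "p \<in> deriv_span \<alpha> d"
  shows "(\<lambda>n. of_nat n * p (n - 1)) \<in> deriv_span \<alpha> (Suc d)"
proof -
  obtain q where q: "p = (\<lambda>n. \<Sum>k\<le>d. q k * pow_deriv \<alpha> k n)"
    using assms by (rule deriv_spanE)
  have "(\<lambda>n. of_nat n * p (n - 1)) = (\<lambda>n. \<Sum>k\<le>d. q k * pow_deriv \<alpha> (Suc k) n)"
  proof
    fix n show "of_nat n * p (n - 1) = (\<Sum>k\<le>d. q k * pow_deriv \<alpha> (Suc k) n)"
      by (cases n)
        (simp_all add: q pow_deriv_def[of _ "Suc _" 0] pow_deriv_Suc_Suc sum_distrib_left algebra_simps)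
  qed
  also have "\<dots> \<in> deriv_span \<alpha> (Suc d)"
    by (intro deriv_span_sum deriv_span_scale pow_deriv_in_deriv_span) auto
  finally show ?thesis .
qed

lemma deriv_span_bound:
  fixes \<alpha> :: complex
  assumes "p \<in> deriv_span \<alpha> d"
  obtains C where "C \<ge> 0" "\<And>n. cmod (p n) \<le> C * (cmod \<alpha> + 1) ^ n"
proof -
  obtain q where q: "p = (\<lambda>n. \<Sum>k\<le>d. q k * pow_deriv \<alpha> k n)"
    using assms by (rule deriv_spanE)
  define C where "C = (\<Sum>k\<le>d. cmod (q k) * fact k)"
  have "cmod (p n) \<le> (\<Sum>k\<le>d. cmod (q k) * (fact k * (cmod \<alpha> + 1) ^ n))" for n
    unfolding q
    by (intro order_trans[OF norm_sum] sum_mono)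
       (auto simp: norm_mult intro!: mult_left_mono norm_pow_deriv_le)
  then have "cmod (p n) \<le> C * (cmod \<alpha> + 1) ^ n" for n
    by (simp add: C_def sum_distrib_right mult.assoc)
  moreover have "C \<ge> 0" unfolding C_def by (intro sum_nonneg) auto
  ultimately show thesis using that by blast
qed

section \<open>Bargmann coefficients\<close>

definition bargmann_state :: "(nat \<Rightarrow> complex) \<Rightarrow> state" where
  "bargmann_state p = (\<lambda>n. p n / complex_of_real (sqrt (fact n)))"

lemma sqrt_fact_Suc: "sqrt (fact (Suc n)) = sqrt (real (Suc n)) * sqrt (fact n)"
  by (simp add: real_sqrt_mult del: of_nat_Suc)

lemma ann_bargmann_state: "ann (bargmann_state p) = bargmann_state (\<lambda>n. p (Suc n))"
proof
  fix n
  have "sqrt (real (Suc n)) \<noteq> 0" "sqrt (fact n) \<noteq> 0" by simp_all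
  then show "ann (bargmann_state p) n = bargmann_state (\<lambda>n. p (Suc n)) n"
    unfolding ann_def bargmann_state_def sqrt_fact_Suc of_real_mult
    by (simp add: field_simps del: of_nat_Suc real_sqrt_eq_zero_cancel_iff)
qed

(* No case split at n = 0 is needed: the factor of_nat n kills the junk value p (0 - 1). *)
lemma adag_bargmann_state: "adag (bargmann_state p) = bargmann_state (\<lambda>n. of_nat n * p (n - 1))"
proof
  fix n
  show "adag (bargmann_state p) n = bargmann_state (\<lambda>n. of_nat n * p (n - 1)) n"
  proof (cases n)
    case (Suc m)
    have "sqrt (real (Suc m)) \<noteq> 0" "sqrt (fact m) \<noteq> 0" by simp_all
    moreover have "complex_of_real (sqrt (real (Suc m))) * complex_of_real (sqrt (real (Suc m))) = of_nat (Suc m)"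
      by (simp flip: of_real_mult del: of_nat_Suc)
    ultimately show ?thesis
      unfolding adag_def bargmann_state_def Suc sqrt_fact_Suc of_real_mult
      by (simp add: field_simps del: of_nat_Suc real_sqrt_eq_zero_cancel_iff)
  qed (simp add: adag_def bargmann_state_def)
qed

lemma coh_eq_bargmann_state:
  "coh \<alpha> = bargmann_state (\<lambda>n. complex_of_real (exp (- (cmod \<alpha>)\<^sup>2 / 2)) * pow_deriv \<alpha> 0 n)"
  by (simp add: coh_def bargmann_state_def pow_deriv_def fun_eq_iff)

lemma coherent_rank_le_power_sum:
  "coherent_rank_le (bargmann_state (\<lambda>n. \<Sum>j<k. c j * \<beta> j ^ n)) k"
  unfolding coherent_rank_le_def
proof (intro exI ext)
  fix n
  define E where "E j = complex_of_real (exp (- (cmod (\<beta> j))\<^sup>2 / 2))" for j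
  have "E j \<noteq> 0" for j unfolding E_def by simp
  then show "bargmann_state (\<lambda>n. \<Sum>j<k. c j * \<beta> j ^ n) n = (\<Sum>j<k. c j / E j * coh (\<beta> j) n)"
    unfolding bargmann_state_def coh_def E_def[symmetric] by (simp add: sum_divide_distrib)
qed

lemma ann_in_deriv_span_states:
  "\<psi> \<in> bargmann_state ` deriv_span \<alpha> d \<Longrightarrow> ann \<psi> \<in> bargmann_state ` deriv_span \<alpha> d"
  by (auto simp: ann_bargmann_state intro: deriv_span_shift)

lemma adag_in_deriv_span_states:
  assumes "\<psi> \<in> bargmann_state ` deriv_span \<alpha> d"
  shows "adag \<psi> \<in> bargmann_state ` deriv_span \<alpha> (Suc d)"
proof -
  obtain p where p: "p \<in> deriv_span \<alpha> d" and "\<psi> = bargmann_state p"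
    using assms by blast
  then have "adag \<psi> = bargmann_state (\<lambda>n. of_nat n * p (n - 1))"
    by (simp only: adag_bargmann_state)
  with deriv_span_raise[OF p] show ?thesis by blast
qed

lemma word_op_in_deriv_span_states:
  "\<psi> \<in> bargmann_state ` deriv_span \<alpha> d \<Longrightarrow>
     word_op ws \<psi> \<in> bargmann_state ` deriv_span \<alpha> (d + sum_list (map fst ws))"
proof (induction ws arbitrary: d \<psi>)
  case Nil
  then show ?case by (simp add: word_op_def)
next
  case (Cons nm ws)
  obtain n m where nm: "nm = (n, m)" by fastforce
  let ?d = "d + sum_list (map fst ws)"
  have "(ann ^^ m) (word_op ws \<psi>) \<in> bargmann_state ` deriv_span \<alpha> ?d" for m
    by (induction m) (simp_all add: Cons ann_in_deriv_span_states)
  then have "(adag ^^ n) ((ann ^^ m) (word_op ws \<psi>)) \<in> bargmann_state ` deriv_span \<alpha> (?d + n)" for n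
    by (induction n) (simp_all add: adag_in_deriv_span_states)
  moreover have "word_op (nm # ws) \<psi> = (adag ^^ n) ((ann ^^ m) (word_op ws \<psi>))"
    by (simp add: word_op_def nm)
  moreover have "d + sum_list (map fst (nm # ws)) = ?d + n" by (simp add: nm)
  ultimately show ?case by (simp only:)
qed

section \<open>Finite differences\<close>

lemma sum_nodes_power_binomial:
  fixes \<alpha> h :: "'a::comm_semiring_1"
  shows "(\<Sum>j\<le>N. c j * (\<alpha> + of_nat j * h) ^ n) =
    (\<Sum>m\<le>n. of_nat (n choose m) * \<alpha> ^ (n - m) * (h ^ m * (\<Sum>j\<le>N. c j * of_nat j ^ m)))"
proof -
  have "(\<alpha> + of_nat j * h) ^ n = (\<Sum>m\<le>n. of_nat (n choose m) * (of_nat j * h) ^ m * \<alpha> ^ (n - m))" for j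
    using binomial_ring[of "of_nat j * h" \<alpha> n] by (simp add: add.commute)
  then have "(\<Sum>j\<le>N. c j * (\<alpha> + of_nat j * h) ^ n) =
      (\<Sum>j\<le>N. \<Sum>m\<le>n. c j * (of_nat (n choose m) * (of_nat j * h) ^ m * \<alpha> ^ (n - m)))"
    by (simp add: sum_distrib_left)
  also have "\<dots> = (\<Sum>m\<le>n. \<Sum>j\<le>N. c j * (of_nat (n choose m) * (of_nat j * h) ^ m * \<alpha> ^ (n - m)))"
    by (rule sum.swap)
  also have "\<dots> = (\<Sum>m\<le>n. of_nat (n choose m) * \<alpha> ^ (n - m) * (h ^ m * (\<Sum>j\<le>N. c j * of_nat j ^ m)))"
    by (simp add: sum_distrib_left power_mult_distrib algebra_simps)
  finally show ?thesis .
qed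

(* Weights for which sum_j fd_weight N q h j * (alpha + j h)^n approximates
   sum_k q k * pow_deriv alpha k n as h -> 0. *)
definition fd_weight :: "nat \<Rightarrow> (nat \<Rightarrow> complex) \<Rightarrow> complex \<Rightarrow> nat \<Rightarrow> complex" where
  "fd_weight N q h j = (\<Sum>k\<le>N. q k * fact k * coeff (lagrange_basis N j) k / h ^ k)"

lemma norm_sum_nodes_power_le:
  fixes x :: "nat \<Rightarrow> 'a::real_normed_field"
  shows "norm (\<Sum>j\<le>N. of_nat j ^ m * x j) \<le> (\<Sum>j\<le>N. norm (x j)) * real N ^ m"
proof -
  have "norm (\<Sum>j\<le>N. of_nat j ^ m * x j) \<le> (\<Sum>j\<le>N. norm (x j) * real N ^ m)"
    by (intro order_trans[OF norm_sum] sum_mono)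
       (auto simp: norm_mult norm_power mult.commute intro!: mult_left_mono power_mono)
  then show ?thesis by (simp add: sum_distrib_right)
qed

lemma fd_weight_moment_expand:
  "h ^ m * (\<Sum>j\<le>N. fd_weight N q h j * of_nat j ^ m) =
     (\<Sum>k\<le>N. q k * fact k * (h ^ m / h ^ k) * (\<Sum>j\<le>N. of_nat j ^ m * coeff (lagrange_basis N j) k))"
proof -
  have "h ^ m * (\<Sum>j\<le>N. fd_weight N q h j * of_nat j ^ m) =
      (\<Sum>j\<le>N. \<Sum>k\<le>N. q k * fact k * (h ^ m / h ^ k) * (of_nat j ^ m * coeff (lagrange_basis N j) k))"
    by (simp add: fd_weight_def sum_distrib_left sum_distrib_right algebra_simps)
  also have "\<dots> = (\<Sum>k\<le>N. q k * fact k * (h ^ m / h ^ k) *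
      (\<Sum>j\<le>N. of_nat j ^ m * coeff (lagrange_basis N j) k))"
    by (subst sum.swap) (simp add: sum_distrib_left)
  finally show ?thesis .
qed

lemma fd_weight_moment:
  assumes "h \<noteq> 0" "m \<le> N"
  shows "h ^ m * (\<Sum>j\<le>N. fd_weight N q h j * of_nat j ^ m) = q m * fact m"
  using assms
  by (simp add: fd_weight_moment_expand sum_power_mult_coeff_lagrange_basis
      if_distrib[of "\<lambda>x. _ * x"] sum.delta cong: if_cong)

lemma norm_fd_weight_moment_le:
  assumes "h \<noteq> 0" "cmod h \<le> 1" "N < m"
  shows "cmod (h ^ m * (\<Sum>j\<le>N. fd_weight N q h j * of_nat j ^ m))
    \<le> cmod h * (\<Sum>k\<le>N. cmod (q k) * fact k * (\<Sum>j\<le>N. cmod (coeff (lagrange_basis N j) k))) * real N ^ m"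
proof -
  define L :: "nat \<Rightarrow> nat \<Rightarrow> complex" where "L j k = coeff (lagrange_basis N j) k" for j k
  have "cmod (q k * fact k * (h ^ m / h ^ k) * (\<Sum>j\<le>N. of_nat j ^ m * L j k)) \<le>
      cmod h * (cmod (q k) * fact k * (\<Sum>j\<le>N. cmod (L j k))) * real N ^ m" if "k \<le> N" for k
  proof -
    have "h ^ m / h ^ k = h ^ (m - k)"
      using assms that by (simp add: power_diff)
    then have h_le: "cmod (h ^ m / h ^ k) \<le> cmod h"
      using power_decreasing[of 1 "m - k" "cmod h"] assms that by (simp add: norm_power)
    have "cmod (q k * fact k * (h ^ m / h ^ k) * (\<Sum>j\<le>N. of_nat j ^ m * L j k)) =
        (cmod (q k) * fact k) * cmod (h ^ m / h ^ k) * cmod (\<Sum>j\<le>N. of_nat j ^ m * L j k)"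
      by (simp only: norm_mult norm_fact)
    also have "\<dots> \<le> (cmod (q k) * fact k) * cmod h * ((\<Sum>j\<le>N. cmod (L j k)) * real N ^ m)"
      by (intro mult_mono h_le norm_sum_nodes_power_le) auto
    finally show ?thesis by (simp add: ac_simps)
  qed
  then have "cmod (\<Sum>k\<le>N. q k * fact k * (h ^ m / h ^ k) * (\<Sum>j\<le>N. of_nat j ^ m * L j k)) \<le>
      (\<Sum>k\<le>N. cmod h * (cmod (q k) * fact k * (\<Sum>j\<le>N. cmod (L j k))) * real N ^ m)"
    by (intro order_trans[OF norm_sum] sum_mono) auto
  also have "\<dots> = cmod h * (\<Sum>k\<le>N. cmod (q k) * fact k * (\<Sum>j\<le>N. cmod (L j k))) * real N ^ m"
    by (simp add: sum_distrib_left sum_distrib_right)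
  finally show ?thesis
    unfolding fd_weight_moment_expand L_def[symmetric] .
qed

lemma finite_difference_approx:
  fixes \<alpha> :: complex
  obtains K where "K \<ge> 0"
    "\<And>h n. h \<noteq> 0 \<Longrightarrow> cmod h \<le> 1 \<Longrightarrow>
       cmod ((\<Sum>j\<le>N. fd_weight N q h j * (\<alpha> + of_nat j * h) ^ n) - (\<Sum>k\<le>N. q k * pow_deriv \<alpha> k n))
         \<le> cmod h * K * (cmod \<alpha> + real N) ^ n"
proof -
  define K where "K = (\<Sum>k\<le>N. cmod (q k) * fact k * (\<Sum>j\<le>N. cmod (coeff (lagrange_basis N j) k)))"
  have "K \<ge> 0"
    unfolding K_def by (intro sum_nonneg mult_nonneg_nonneg) auto
  moreover have "cmod ((\<Sum>j\<le>N. fd_weight N q h j * (\<alpha> + of_nat j * h) ^ n) - (\<Sum>k\<le>N. q k * pow_deriv \<alpha> k n))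
      \<le> cmod h * K * (cmod \<alpha> + real N) ^ n" if h: "h \<noteq> 0" "cmod h \<le> 1" for h n
  proof -
    define E where "E m = h ^ m * (\<Sum>j\<le>N. fd_weight N q h j * of_nat j ^ m) -
      (if m \<le> N then q m * fact m else 0)" for m
    have E_le: "cmod (E m) \<le> cmod h * K * real N ^ m" for m
    proof (cases "m \<le> N")
      case True
      then show ?thesis
        using h \<open>K \<ge> 0\<close> by (simp add: E_def fd_weight_moment)
    next
      case False
      then show ?thesis
        using norm_fd_weight_moment_le[OF h] by (simp add: E_def K_def)
    qed
    have "(\<Sum>j\<le>N. fd_weight N q h j * (\<alpha> + of_nat j * h) ^ n) - (\<Sum>k\<le>N. q k * pow_deriv \<alpha> k n) =
        (\<Sum>m\<le>n. of_nat (n choose m) * \<alpha> ^ (n - m) * E m)"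
      unfolding sum_nodes_power_binomial sum_pow_deriv_binomial E_def
      by (simp add: sum_subtractf algebra_simps)
    also have "cmod \<dots> \<le> (\<Sum>m\<le>n. real (n choose m) * cmod \<alpha> ^ (n - m) * (cmod h * K * real N ^ m))"
      using E_le
      by (intro order_trans[OF norm_sum] sum_mono) (simp add: norm_mult norm_power mult_left_mono)
    also have "\<dots> = cmod h * K * (cmod \<alpha> + real N) ^ n"
      by (simp add: binomial_ring[of "real N" "cmod \<alpha>"] add.commute sum_distrib_left algebra_simps)
    finally show ?thesis .
  qed
  ultimately show thesis by (rule that)
qed

section \<open>Fidelity of nearby states\<close>

lemma inner_st_eq_suminf:
  assumes "summable (\<lambda>n. cmod (cnj (\<phi> n) * \<psi> n))"
  shows "inner_st \<phi> \<psi> = (\<Sum>n. cnj (\<phi> n) * \<psi> n)"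
  unfolding inner_st_def
  by (intro infsumI norm_summable_imp_has_sum assms summable_sums summable_norm_cancel)

lemma inner_st_self:
  assumes "summable (\<lambda>n. cmod (f n) ^ 2)"
  shows "inner_st f f = complex_of_real (\<Sum>n. cmod (f n) ^ 2)"
proof -
  have sq: "cnj (f n) * f n = complex_of_real (cmod (f n) ^ 2)" for n
    by (metis complex_norm_square mult.commute)
  have "inner_st f f = (\<Sum>n. complex_of_real (cmod (f n) ^ 2))"
    using inner_st_eq_suminf[of f f] assms by (simp add: sq norm_power)
  also have "\<dots> = complex_of_real (\<Sum>n. cmod (f n) ^ 2)"
    by (rule suminf_of_real[OF assms, symmetric])
  finally show ?thesis .
qed

lemma summable_norm_sq_if_le:
  fixes f :: "nat \<Rightarrow> 'a::real_normed_vector"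
  assumes "summable (\<lambda>n. r n ^ 2)" "\<And>n. norm (f n) \<le> c * r n"
  shows "summable (\<lambda>n. norm (f n) ^ 2)"
proof (rule summable_comparison_test'[where g = "\<lambda>n. c ^ 2 * r n ^ 2" and N = 0])
  show "summable (\<lambda>n. c ^ 2 * r n ^ 2)" using assms(1) by (rule summable_mult)
  show "norm (norm (f n) ^ 2) \<le> c ^ 2 * r n ^ 2" for n
    using assms(2)[of n] by (simp add: power_mono flip: power_mult_distrib)
qed

lemma suminf_norm_sq_pos:
  fixes f :: "nat \<Rightarrow> 'a::real_normed_vector"
  assumes "summable (\<lambda>n. norm (f n) ^ 2)" "f \<noteq> (\<lambda>_. 0)"
  shows "(\<Sum>n. norm (f n) ^ 2) > 0"
proof -
  obtain i where "f i \<noteq> 0" using assms(2) by auto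
  then show ?thesis by (intro suminf_pos2[OF assms(1), of i]) auto
qed

context
  fixes \<phi> \<psi> :: state and r :: "nat \<Rightarrow> real" and a \<epsilon> :: real
  assumes r: "summable (\<lambda>n. r n ^ 2)"
    and \<psi>_le: "\<And>n. cmod (\<psi> n) \<le> a * r n"
    and diff_le: "\<And>n. cmod (\<phi> n - \<psi> n) \<le> \<epsilon> * r n"
begin

lemma summable_norm_sq_exact: "summable (\<lambda>n. cmod (\<psi> n) ^ 2)"
  using r \<psi>_le by (rule summable_norm_sq_if_le)

lemma summable_norm_sq_approx: "summable (\<lambda>n. cmod (\<phi> n) ^ 2)"
proof (rule summable_norm_sq_if_le[OF r])
  show "cmod (\<phi> n) \<le> (a + \<epsilon>) * r n" for n
    using norm_triangle_ineq[of "\<psi> n" "\<phi> n - \<psi> n"] \<psi>_le[of n] diff_le[of n]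
    by (simp add: distrib_right)
qed

lemma norm_diff_mult_le: "cmod (\<phi> n - \<psi> n) * cmod (\<psi> n) \<le> \<epsilon> * a * r n ^ 2"
proof -
  have "0 \<le> \<epsilon> * r n"
    by (rule order_trans[OF norm_ge_zero diff_le])
  then have "cmod (\<phi> n - \<psi> n) * cmod (\<psi> n) \<le> (\<epsilon> * r n) * (a * r n)"
    by (intro mult_mono diff_le \<psi>_le) auto
  then show ?thesis by (simp add: power2_eq_square ac_simps)
qed

lemma summable_norm_diff_mult: "summable (\<lambda>n. cmod (\<phi> n - \<psi> n) * cmod (\<psi> n))"
  by (rule summable_comparison_test'[where g = "\<lambda>n. \<epsilon> * a * r n ^ 2" and N = 0])
     (use r norm_diff_mult_le in \<open>auto intro: summable_mult\<close>)

lemma inner_st_eq_norm_sq_add: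
  "inner_st \<phi> \<psi> = complex_of_real (\<Sum>n. cmod (\<psi> n) ^ 2) + (\<Sum>n. cnj (\<phi> n - \<psi> n) * \<psi> n)"
proof -
  define e where "e n = \<phi> n - \<psi> n" for n
  have se: "summable (\<lambda>n. cmod (cnj (e n) * \<psi> n))"
    using summable_norm_diff_mult by (simp only: e_def norm_mult complex_mod_cnj)
  have s\<phi>\<psi>: "summable (\<lambda>n. cmod (cnj (\<phi> n) * \<psi> n))"
  proof (rule summable_comparison_test'[where N = 0])
    show "summable (\<lambda>n. cmod (\<psi> n) ^ 2 + cmod (cnj (e n) * \<psi> n))"
      using summable_norm_sq_exact se by (rule summable_add)
    show "norm (cmod (cnj (\<phi> n) * \<psi> n)) \<le> cmod (\<psi> n) ^ 2 + cmod (cnj (e n) * \<psi> n)" for n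
      using norm_triangle_ineq[of "cnj (\<psi> n) * \<psi> n" "cnj (e n) * \<psi> n"]
      by (simp add: e_def norm_mult power2_eq_square algebra_simps)
  qed
  have "cnj (\<phi> n) * \<psi> n = complex_of_real (cmod (\<psi> n) ^ 2) + cnj (e n) * \<psi> n" for n
    unfolding complex_norm_square e_def by (simp add: algebra_simps)
  then have "inner_st \<phi> \<psi> = (\<Sum>n. complex_of_real (cmod (\<psi> n) ^ 2) + cnj (e n) * \<psi> n)"
    using inner_st_eq_suminf[OF s\<phi>\<psi>] by simp
  also have "\<dots> = complex_of_real (\<Sum>n. cmod (\<psi> n) ^ 2) + (\<Sum>n. cnj (e n) * \<psi> n)"
  proof -
    have "summable (\<lambda>n. complex_of_real (cmod (\<psi> n) ^ 2))"
      using summable_norm_sq_exact by (simp only: summable_of_real_iff)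
    moreover have "summable (\<lambda>n. cnj (e n) * \<psi> n)"
      using se by (rule summable_norm_cancel)
    ultimately show ?thesis
      by (simp only: suminf_of_real[OF summable_norm_sq_exact] suminf_add)
  qed
  finally show ?thesis by (simp only: e_def)
qed

lemma norm_inner_st_ge:
  "cmod (inner_st \<phi> \<psi>) \<ge> (\<Sum>n. cmod (\<psi> n) ^ 2) - \<epsilon> * a * (\<Sum>n. r n ^ 2)"
proof -
  have se: "summable (\<lambda>n. cmod (cnj (\<phi> n - \<psi> n) * \<psi> n))"
    using summable_norm_diff_mult by (simp only: norm_mult complex_mod_cnj)
  have "cmod (\<Sum>n. cnj (\<phi> n - \<psi> n) * \<psi> n) \<le> (\<Sum>n. cmod (cnj (\<phi> n - \<psi> n) * \<psi> n))"
    by (rule summable_norm[OF se])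
  also have "\<dots> \<le> (\<Sum>n. \<epsilon> * a * r n ^ 2)"
    using se r norm_diff_mult_le
    by (intro suminf_le summable_mult) (auto simp: norm_mult simp del: complex_cnj_diff)
  also have "\<dots> = \<epsilon> * a * (\<Sum>n. r n ^ 2)"
    using r by (rule suminf_mult)
  finally have "cmod (\<Sum>n. cnj (\<phi> n - \<psi> n) * \<psi> n) \<le> \<epsilon> * a * (\<Sum>n. r n ^ 2)" .
  moreover have "(\<Sum>n. cmod (\<psi> n) ^ 2) \<ge> 0"
    using summable_norm_sq_exact by (intro suminf_nonneg) auto
  ultimately show ?thesis
    using norm_diff_ineq[of "complex_of_real (\<Sum>n. cmod (\<psi> n) ^ 2)" "\<Sum>n. cnj (\<phi> n - \<psi> n) * \<psi> n"]
    by (simp only: inner_st_eq_norm_sq_add) simp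
qed

lemma suminf_norm_sq_le:
  "(\<Sum>n. cmod (\<phi> n) ^ 2) \<le>
     (\<Sum>n. cmod (\<psi> n) ^ 2) + 2 * \<epsilon> * a * (\<Sum>n. r n ^ 2) + \<epsilon> ^ 2 * (\<Sum>n. r n ^ 2)"
proof -
  have pointwise: "cmod (\<phi> n) ^ 2 \<le> cmod (\<psi> n) ^ 2 + (2 * \<epsilon> * a + \<epsilon> ^ 2) * r n ^ 2" for n
  proof -
    have "cmod (\<phi> n) \<le> cmod (\<psi> n) + cmod (\<phi> n - \<psi> n)"
      using norm_triangle_ineq[of "\<psi> n" "\<phi> n - \<psi> n"] by simp
    then have "cmod (\<phi> n) ^ 2 \<le> (cmod (\<psi> n) + cmod (\<phi> n - \<psi> n)) ^ 2"
      by (intro power_mono) auto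
    also have "\<dots> = cmod (\<psi> n) ^ 2 + 2 * (cmod (\<phi> n - \<psi> n) * cmod (\<psi> n)) + cmod (\<phi> n - \<psi> n) ^ 2"
      by (simp add: power2_eq_square algebra_simps)
    also have "\<dots> \<le> cmod (\<psi> n) ^ 2 + 2 * (\<epsilon> * a * r n ^ 2) + (\<epsilon> * r n) ^ 2"
      using norm_diff_mult_le[of n] diff_le[of n] by (intro add_mono power_mono) auto
    finally show ?thesis by (simp add: algebra_simps power_mult_distrib)
  qed
  have "(\<Sum>n. cmod (\<phi> n) ^ 2) \<le> (\<Sum>n. cmod (\<psi> n) ^ 2 + (2 * \<epsilon> * a + \<epsilon> ^ 2) * r n ^ 2)"
    using summable_norm_sq_approx summable_norm_sq_exact r pointwise
    by (intro suminf_le summable_add summable_mult) auto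
  also have "\<dots> = (\<Sum>n. cmod (\<psi> n) ^ 2) + (2 * \<epsilon> * a + \<epsilon> ^ 2) * (\<Sum>n. r n ^ 2)"
    using summable_norm_sq_exact r by (simp add: suminf_add[symmetric] summable_mult suminf_mult)
  finally show ?thesis by (simp add: algebra_simps)
qed

lemma fidelity_ge:
  assumes small: "\<epsilon> * a * (\<Sum>n. r n ^ 2) < (\<Sum>n. cmod (\<psi> n) ^ 2)"
  shows "fidelity \<phi> \<psi> \<ge>
    ((\<Sum>n. cmod (\<psi> n) ^ 2) - \<epsilon> * a * (\<Sum>n. r n ^ 2)) ^ 2 /
    (((\<Sum>n. cmod (\<psi> n) ^ 2) + 2 * \<epsilon> * a * (\<Sum>n. r n ^ 2) + \<epsilon> ^ 2 * (\<Sum>n. r n ^ 2)) *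
     (\<Sum>n. cmod (\<psi> n) ^ 2))"
proof -
  define X where "X = (\<Sum>n. cmod (\<phi> n) ^ 2)"
  define Y where "Y = (\<Sum>n. cmod (\<psi> n) ^ 2)"
  define M where "M = \<epsilon> * a * (\<Sum>n. r n ^ 2)"
  define B where "B = Y + 2 * \<epsilon> * a * (\<Sum>n. r n ^ 2) + \<epsilon> ^ 2 * (\<Sum>n. r n ^ 2)"
  have "0 \<le> \<epsilon> * a * r n ^ 2" for n
    by (rule order_trans[OF mult_nonneg_nonneg[OF norm_ge_zero norm_ge_zero] norm_diff_mult_le])
  then have "0 \<le> (\<Sum>n. \<epsilon> * a * r n ^ 2)"
    using r by (intro suminf_nonneg summable_mult)
  then have "M \<ge> 0"
    unfolding M_def by (simp only: suminf_mult[OF r])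
  then have "Y > 0" using small by (simp add: M_def Y_def)
  have inner: "cmod (inner_st \<phi> \<psi>) \<ge> Y - M"
    unfolding Y_def M_def by (rule norm_inner_st_ge)
  then have "inner_st \<phi> \<psi> \<noteq> 0" using small by (auto simp: Y_def M_def)
  then have "\<phi> \<noteq> (\<lambda>_. 0)" by (auto simp: inner_st_def)
  then have "X > 0"
    unfolding X_def using summable_norm_sq_approx by (intro suminf_norm_sq_pos)
  have "(Y - M) ^ 2 / (B * Y) \<le> (Y - M) ^ 2 / (X * Y)"
    using \<open>X > 0\<close> \<open>Y > 0\<close> suminf_norm_sq_le
    by (intro divide_left_mono mult_right_mono mult_pos_pos) (auto simp: X_def Y_def B_def)
  also have "\<dots> \<le> cmod (inner_st \<phi> \<psi>) ^ 2 / (X * Y)"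
    using inner small \<open>X > 0\<close> \<open>Y > 0\<close>
    by (intro divide_right_mono power_mono) (auto simp: Y_def M_def)
  also have "\<dots> = fidelity \<phi> \<psi>"
    unfolding fidelity_def X_def Y_def
    by (simp add: inner_st_self summable_norm_sq_approx summable_norm_sq_exact)
  finally show ?thesis by (simp add: Y_def M_def B_def)
qed

end

lemma fidelity_tendsto_one:
  fixes \<psi> :: state and r :: "nat \<Rightarrow> real"
  assumes r: "summable (\<lambda>n. r n ^ 2)" and \<psi>_le: "\<And>n. cmod (\<psi> n) \<le> a * r n"
    and "\<psi> \<noteq> (\<lambda>_. 0)" and "\<delta> > 0"
  obtains \<epsilon> where "\<epsilon> > 0"
    "\<And>\<phi>. (\<And>n. cmod (\<phi> n - \<psi> n) \<le> \<epsilon> * r n) \<Longrightarrow> fidelity \<phi> \<psi> > 1 - \<delta>"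
proof -
  define Y where "Y = (\<Sum>n. cmod (\<psi> n) ^ 2)"
  define S where "S = (\<Sum>n. r n ^ 2)"
  define g where "g \<epsilon> = (Y - \<epsilon> * a * S) ^ 2 / ((Y + 2 * \<epsilon> * a * S + \<epsilon> ^ 2 * S) * Y)" for \<epsilon>
  have "Y > 0"
    unfolding Y_def using summable_norm_sq_if_le[OF r \<psi>_le] \<open>\<psi> \<noteq> (\<lambda>_. 0)\<close>
    by (rule suminf_norm_sq_pos)
  have "(g \<longlongrightarrow> (Y - 0 * a * S) ^ 2 / ((Y + 2 * 0 * a * S + 0 ^ 2 * S) * Y)) (at_right 0)"
    unfolding g_def using \<open>Y > 0\<close> by (intro tendsto_intros) auto
  then have "(g \<longlongrightarrow> 1) (at_right 0)"
    using \<open>Y > 0\<close> by (simp add: power2_eq_square)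
  then have "eventually (\<lambda>\<epsilon>. g \<epsilon> > 1 - \<delta>) (at_right 0)"
    using \<open>\<delta> > 0\<close> by (intro order_tendstoD) auto
  moreover have "eventually (\<lambda>\<epsilon>. \<epsilon> * a * S < Y) (at_right 0)"
    using \<open>Y > 0\<close> by (intro order_tendstoD tendsto_eq_intros) auto
  ultimately have "eventually (\<lambda>\<epsilon>. g \<epsilon> > 1 - \<delta> \<and> \<epsilon> * a * S < Y) (at_right 0)"
    by (rule eventually_conj)
  then obtain b where "b > 0" and b: "\<And>\<epsilon>. 0 < \<epsilon> \<Longrightarrow> \<epsilon> < b \<Longrightarrow> g \<epsilon> > 1 - \<delta> \<and> \<epsilon> * a * S < Y"
    unfolding eventually_at_right_field by auto
  define \<epsilon> where "\<epsilon> = b / 2"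
  have "\<epsilon> > 0" "g \<epsilon> > 1 - \<delta>" "\<epsilon> * a * S < Y"
    using \<open>b > 0\<close> b[of \<epsilon>] by (auto simp: \<epsilon>_def)
  show thesis
  proof (rule that[OF \<open>\<epsilon> > 0\<close>])
    fix \<phi> assume "\<And>n. cmod (\<phi> n - \<psi> n) \<le> \<epsilon> * r n"
    then have "g \<epsilon> \<le> fidelity \<phi> \<psi>"
      using fidelity_ge[OF r \<psi>_le] \<open>\<epsilon> * a * S < Y\<close> by (simp add: g_def Y_def S_def)
    with \<open>g \<epsilon> > 1 - \<delta>\<close> show "fidelity \<phi> \<psi> > 1 - \<delta>" by simp
  qed
qed

section \<open>Approximate coherent rank\<close>

lemma summable_power_div_sqrt_fact_sq:
  "summable (\<lambda>n. (R ^ n / sqrt (fact n)) ^ 2)"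
proof -
  have "(R ^ n / sqrt (fact n)) ^ 2 = inverse (fact n) * (R ^ 2) ^ n" for n
    by (simp add: power_divide field_simps flip: power_mult)
  then show ?thesis
    using summable_exp[of "R ^ 2"] by simp
qed

lemma norm_bargmann_state_le:
  assumes "cmod (p n) \<le> C * R ^ n"
  shows "cmod (bargmann_state p n) \<le> C * (R ^ n / sqrt (fact n))"
  using assms by (simp add: bargmann_state_def norm_divide divide_right_mono)

lemma deriv_span_approx_power_sum:
  fixes \<alpha> :: complex
  assumes "P \<in> deriv_span \<alpha> N" "\<epsilon> > 0"
  obtains c \<beta> where "\<And>n. cmod ((\<Sum>j<N + 1. c j * \<beta> j ^ n) - P n) \<le> \<epsilon> * (cmod \<alpha> + real N) ^ n"
proof -
  obtain q where q: "P = (\<lambda>n. \<Sum>k\<le>N. q k * pow_deriv \<alpha> k n)"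
    using assms(1) by (rule deriv_spanE)
  obtain K where "K \<ge> 0" and fd: "\<And>h n. h \<noteq> 0 \<Longrightarrow> cmod h \<le> 1 \<Longrightarrow>
      cmod ((\<Sum>j\<le>N. fd_weight N q h j * (\<alpha> + of_nat j * h) ^ n) - (\<Sum>k\<le>N. q k * pow_deriv \<alpha> k n))
        \<le> cmod h * K * (cmod \<alpha> + real N) ^ n"
    by (rule finite_difference_approx[where \<alpha> = \<alpha> and N = N and q = q]) blast
  define u where "u = min 1 (\<epsilon> / (K + 1))"
  have "u > 0" "u \<le> 1"
    using \<open>\<epsilon> > 0\<close> \<open>K \<ge> 0\<close> by (simp_all add: u_def)
  have "u * K \<le> \<epsilon> / (K + 1) * K"
    using \<open>K \<ge> 0\<close> by (intro mult_right_mono) (simp_all add: u_def)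
  also have "\<dots> \<le> \<epsilon>"
    using \<open>\<epsilon> > 0\<close> \<open>K \<ge> 0\<close> by (simp add: field_simps)
  finally have "u * K \<le> \<epsilon>" .
  show thesis
  proof (rule that)
    fix n
    let ?h = "complex_of_real u"
    have "cmod ((\<Sum>j<N + 1. fd_weight N q ?h j * (\<alpha> + of_nat j * ?h) ^ n) - P n)
        \<le> u * K * (cmod \<alpha> + real N) ^ n"
      using fd[of ?h n] \<open>u > 0\<close> \<open>u \<le> 1\<close> by (simp add: lessThan_Suc_atMost q)
    also have "\<dots> \<le> \<epsilon> * (cmod \<alpha> + real N) ^ n"
      using \<open>u * K \<le> \<epsilon>\<close> by (intro mult_right_mono) auto
    finally show "cmod ((\<Sum>j<N + 1. fd_weight N q ?h j * (\<alpha> + of_nat j * ?h) ^ n) - P n)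
        \<le> \<epsilon> * (cmod \<alpha> + real N) ^ n" .
  qed
qed

lemma approx_coherent_rank_le_deriv_span:
  fixes \<alpha> :: complex
  assumes "P \<in> deriv_span \<alpha> N"
  shows "approx_coherent_rank_le (bargmann_state P) (N + 1)"
proof (cases "bargmann_state P = (\<lambda>_. 0)")
  case True
  then show ?thesis by (simp add: approx_coherent_rank_le_def)
next
  case False
  define R where "R = cmod \<alpha> + real N + 1"
  define r where "r n = R ^ n / sqrt (fact n)" for n
  have r: "summable (\<lambda>n. r n ^ 2)"
    unfolding r_def by (rule summable_power_div_sqrt_fact_sq)
  obtain C where "C \<ge> 0" and P_le: "\<And>n. cmod (P n) \<le> C * (cmod \<alpha> + 1) ^ n"
    using assms by (rule deriv_span_bound) auto
  have P_le_r: "cmod (bargmann_state P n) \<le> C * r n" for n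
    unfolding r_def using \<open>C \<ge> 0\<close>
    by (intro norm_bargmann_state_le order_trans[OF P_le]) (auto simp: R_def intro!: mult_left_mono power_mono)
  have "\<exists>\<phi>. coherent_rank_le \<phi> (N + 1) \<and> fidelity \<phi> (bargmann_state P) > 1 - \<delta>" if "\<delta> > 0" for \<delta>
  proof -
    obtain \<epsilon> where "\<epsilon> > 0" and fid: "\<And>\<phi>. (\<And>n. cmod (\<phi> n - bargmann_state P n) \<le> \<epsilon> * r n) \<Longrightarrow>
        fidelity \<phi> (bargmann_state P) > 1 - \<delta>"
      using fidelity_tendsto_one[OF r P_le_r False \<open>\<delta> > 0\<close>] by blast
    obtain c \<beta> where approx: "\<And>n. cmod ((\<Sum>j<N + 1. c j * \<beta> j ^ n) - P n) \<le> \<epsilon> * (cmod \<alpha> + real N) ^ n"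
      using deriv_span_approx_power_sum[OF assms \<open>\<epsilon> > 0\<close>] by blast
    define \<Phi> where "\<Phi> n = (\<Sum>j<N + 1. c j * \<beta> j ^ n)" for n
    have "cmod (bargmann_state \<Phi> n - bargmann_state P n) \<le> \<epsilon> * r n" for n
    proof -
      have "bargmann_state \<Phi> n - bargmann_state P n = bargmann_state (\<lambda>n. \<Phi> n - P n) n"
        by (simp add: bargmann_state_def diff_divide_distrib)
      also have "cmod \<dots> \<le> \<epsilon> * r n"
        unfolding r_def \<Phi>_def using \<open>\<epsilon> > 0\<close>
        by (intro norm_bargmann_state_le order_trans[OF approx]) (auto simp: R_def intro!: mult_left_mono power_mono)
      finally show ?thesis .
    qed
    moreover have "coherent_rank_le (bargmann_state \<Phi>) (N + 1)"
      unfolding \<Phi>_def by (rule coherent_rank_le_power_sum)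
    ultimately show ?thesis
      using fid by blast
  qed
  then show ?thesis by (simp add: approx_coherent_rank_le_def)
qed

lemma normal_ordered_op_coh_in_deriv_span_states:
  fixes p N :: nat and b :: "nat \<Rightarrow> complex" and w :: "nat \<Rightarrow> (nat \<times> nat) list"
  assumes "\<forall>i<p. sum_list (map fst (w i)) \<le> N"
  shows "(\<lambda>k. \<Sum>i<p. b i * word_op (w i) (coh \<alpha>) k) \<in> bargmann_state ` deriv_span \<alpha> N"
proof -
  have "coh \<alpha> \<in> bargmann_state ` deriv_span \<alpha> 0"
    unfolding coh_eq_bargmann_state by (intro imageI deriv_span_scale pow_deriv_in_deriv_span) simp
  then have "\<forall>i<p. \<exists>P \<in> deriv_span \<alpha> N. word_op (w i) (coh \<alpha>) = bargmann_state P"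
    using word_op_in_deriv_span_states[of "coh \<alpha>" \<alpha> 0] assms
    by (fastforce intro: deriv_span_mono)
  then obtain f where f: "\<And>i. i < p \<Longrightarrow> f i \<in> deriv_span \<alpha> N \<and> word_op (w i) (coh \<alpha>) = bargmann_state (f i)"
    by metis
  then have "(\<lambda>k. \<Sum>i<p. b i * word_op (w i) (coh \<alpha>) k) = bargmann_state (\<lambda>n. \<Sum>i<p. b i * f i n)"
    by (simp add: bargmann_state_def sum_divide_distrib fun_eq_iff)
  moreover have "(\<lambda>n. \<Sum>i<p. b i * f i n) \<in> deriv_span \<alpha> N"
    by (intro deriv_span_sum deriv_span_scale) (simp_all add: f)
  ultimately show ?thesis by blast
qed

theorem theorem3:
  fixes p N :: nat and b :: "nat \<Rightarrow> complex" and w :: "nat \<Rightarrow> (nat \<times> nat) list"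
  assumes "\<forall>i<p. sum_list (map fst (w i)) \<le> N"
  shows "approx_op_coherent_rank_le
           (\<lambda>\<psi> k. \<Sum>i<p. b i * word_op (w i) \<psi> k) (N + 1)"
  unfolding approx_op_coherent_rank_le_def
proof
  fix \<alpha>
  obtain P where P_in: "P \<in> deriv_span \<alpha> N"
    and P: "(\<lambda>k. \<Sum>i<p. b i * word_op (w i) (coh \<alpha>) k) = bargmann_state P"
    using normal_ordered_op_coh_in_deriv_span_states[OF assms, of b \<alpha>] by blast
  show "approx_coherent_rank_le ((\<lambda>\<psi> k. \<Sum>i<p. b i * word_op (w i) \<psi> k) (coh \<alpha>)) (N + 1)"
    using P_in unfolding P by (rule approx_coherent_rank_le_deriv_span)
qed

end
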